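(* For every number of candidates $m\ge 2$, the distortion of \textsc{PluralityMatching} (over all metric spaces, i.e.\ $\alpha=1$, with worst-case choice among the candidates it may return) is $3$, and this is optimal: no deterministic social choice rule has distortion smaller than $3$.
   Context: An election consists of voters $V=\{1,\dots,n\}$, a finite set $C$ of $m$ candidates, and a profile $\sigma=(\sigma_i)_{i\in V}$ of linear orders over $C$; $c\succeq_i c'$ means $c=c'$ or $i$ ranks $c$ above $c'$. A distance function $d$ on $V\cup C$ is nonnegative, symmetric and satisfies the triangle inequality (co-location allowed); it is consistent with $\sigma$ if $d(i,c)\le d(i,c')$ whenever $i$ ranks $c$ above $c'$. $\mathrm{top}(i)$ is $i$'s first-ranked candidate; $\mathrm{SC}(c)=\sum_{i\in V} d(i,c)$. A deterministic social choice rule maps each profile (of any number of voters, over the fixed set $C$) to a candidate; its distortion is $\sup_\sigma \sup_{d \text{ consistent with }\sigma} \mathrm{SC}(f(\sigma))/\min_{c}\mathrm{SC}(c)$. The integral domination graph $G(a)$ of candidate $a$ is the bipartite graph with both sides copies of $V$ and edge $(i,j)$ iff $a\succeq_i \mathrm{top}(j)$. \textsc{PluralityMatching} returns an arbitrary candidate $a$ for which $G(a)$ admits a perfect matching. *)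

theory Defs
  imports Complex_Main "HOL-Library.Extended_Real"
begin

text \<open>Voters are the naturals 0..n-1 (standing for 1..n); candidates form a finite
set C of type 'c. Points of the space are of type nat + 'c: Inl i is voter i,
Inr c is candidate c.\<close>

definition voters :: "nat \<Rightarrow> nat set" where
  "voters n = {..<n}"

definition points :: "nat \<Rightarrow> 'c set \<Rightarrow> (nat + 'c) set" where
  "points n C = Inl ` voters n \<union> Inr ` C"

text \<open>A profile: each voter i has a linear order sigma i on C, given as a
(reflexive) relation; (c, c') in sigma i means c is ranked weakly above c'
by voter i (i.e. c = c' or c is ranked above c').\<close>

definition profile :: "'c set \<Rightarrow> nat \<Rightarrow> (nat \<Rightarrow> ('c \<times> 'c) set) \<Rightarrow> bool" where
  "profile C n \<sigma> \<longleftrightarrow> (\<forall>i\<in>voters n. linear_order_on C (\<sigma> i))"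

definition weakly_prefers :: "(nat \<Rightarrow> ('c \<times> 'c) set) \<Rightarrow> nat \<Rightarrow> 'c \<Rightarrow> 'c \<Rightarrow> bool" where
  "weakly_prefers \<sigma> i c c' \<longleftrightarrow> (c, c') \<in> \<sigma> i"

definition strictly_prefers :: "(nat \<Rightarrow> ('c \<times> 'c) set) \<Rightarrow> nat \<Rightarrow> 'c \<Rightarrow> 'c \<Rightarrow> bool" where
  "strictly_prefers \<sigma> i c c' \<longleftrightarrow> (c, c') \<in> \<sigma> i \<and> c \<noteq> c'"

definition top :: "'c set \<Rightarrow> (nat \<Rightarrow> ('c \<times> 'c) set) \<Rightarrow> nat \<Rightarrow> 'c" where
  "top C \<sigma> i = (THE c. c \<in> C \<and> (\<forall>c'\<in>C. weakly_prefers \<sigma> i c c'))"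

definition is_distance :: "nat \<Rightarrow> 'c set \<Rightarrow> (nat + 'c \<Rightarrow> nat + 'c \<Rightarrow> real) \<Rightarrow> bool" where
  "is_distance n C d \<longleftrightarrow>
     (\<forall>x\<in>points n C. d x x = 0) \<and>
     (\<forall>x\<in>points n C. \<forall>y\<in>points n C. d x y \<ge> 0 \<and> d x y = d y x) \<and>
     (\<forall>x\<in>points n C. \<forall>y\<in>points n C. \<forall>z\<in>points n C. d x z \<le> d x y + d y z)"

definition consistent :: "nat \<Rightarrow> 'c set \<Rightarrow> (nat \<Rightarrow> ('c \<times> 'c) set) \<Rightarrow> (nat + 'c \<Rightarrow> nat + 'c \<Rightarrow> real) \<Rightarrow> bool" where
  "consistent n C \<sigma> d \<longleftrightarrow>
     (\<forall>i\<in>voters n. \<forall>c\<in>C. \<forall>c'\<in>C. strictly_prefers \<sigma> i c c' \<longrightarrow> d (Inl i) (Inr c) \<le> d (Inl i) (Inr c'))"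

definition SC :: "nat \<Rightarrow> (nat + 'c \<Rightarrow> nat + 'c \<Rightarrow> real) \<Rightarrow> 'c \<Rightarrow> real" where
  "SC n d c = (\<Sum>i\<in>voters n. d (Inl i) (Inr c))"

definition opt_cost :: "'c set \<Rightarrow> nat \<Rightarrow> (nat + 'c \<Rightarrow> nat + 'c \<Rightarrow> real) \<Rightarrow> real" where
  "opt_cost C n d = Min ((\<lambda>c. SC n d c) ` C)"

definition cost_ratio :: "'c set \<Rightarrow> nat \<Rightarrow> (nat + 'c \<Rightarrow> nat + 'c \<Rightarrow> real) \<Rightarrow> 'c \<Rightarrow> ereal" where
  "cost_ratio C n d a =
     (if opt_cost C n d = 0 then (if SC n d a = 0 then 1 else \<infinity>)
      else ereal (SC n d a / opt_cost C n d))"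

definition valid_instance :: "'c set \<Rightarrow> nat \<Rightarrow> (nat \<Rightarrow> ('c \<times> 'c) set) \<Rightarrow> (nat + 'c \<Rightarrow> nat + 'c \<Rightarrow> real) \<Rightarrow> bool" where
  "valid_instance C n \<sigma> d \<longleftrightarrow> n \<ge> 1 \<and> profile C n \<sigma> \<and> is_distance n C d \<and> consistent n C \<sigma> d"

definition is_rule :: "'c set \<Rightarrow> (nat \<Rightarrow> (nat \<Rightarrow> ('c \<times> 'c) set) \<Rightarrow> 'c) \<Rightarrow> bool" where
  "is_rule C f \<longleftrightarrow> (\<forall>n \<sigma>. n \<ge> 1 \<and> profile C n \<sigma> \<longrightarrow> f n \<sigma> \<in> C)"

definition distortion :: "'c set \<Rightarrow> (nat \<Rightarrow> (nat \<Rightarrow> ('c \<times> 'c) set) \<Rightarrow> 'c) \<Rightarrow> ereal" where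
  "distortion C f = (SUP x \<in> {(n, \<sigma>, d). valid_instance C n \<sigma> d}.
                       (case x of (n, \<sigma>, d) \<Rightarrow> cost_ratio C n d (f n \<sigma>)))"

text \<open>Integral domination graph G(a): bipartite, both sides copies of V,
edge (i, j) iff a is weakly preferred by i to top(j).\<close>

definition dom_edge :: "'c set \<Rightarrow> (nat \<Rightarrow> ('c \<times> 'c) set) \<Rightarrow> 'c \<Rightarrow> nat \<Rightarrow> nat \<Rightarrow> bool" where
  "dom_edge C \<sigma> a i j \<longleftrightarrow> weakly_prefers \<sigma> i a (top C \<sigma> j)"

definition perfect_matching :: "nat set \<Rightarrow> (nat \<Rightarrow> nat \<Rightarrow> bool) \<Rightarrow> (nat \<times> nat) set \<Rightarrow> bool" where
  "perfect_matching V E M \<longleftrightarrow>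
     M \<subseteq> V \<times> V \<and> (\<forall>(i, j)\<in>M. E i j) \<and>
     (\<forall>i\<in>V. \<exists>!j. (i, j) \<in> M) \<and> (\<forall>j\<in>V. \<exists>!i. (i, j) \<in> M)"

definition admits_pm :: "'c set \<Rightarrow> nat \<Rightarrow> (nat \<Rightarrow> ('c \<times> 'c) set) \<Rightarrow> 'c \<Rightarrow> bool" where
  "admits_pm C n \<sigma> a \<longleftrightarrow> (\<exists>M. perfect_matching (voters n) (dom_edge C \<sigma> a) M)"

text \<open>Distortion of PluralityMatching with worst-case choice among the candidates
it may return.\<close>

definition pm_distortion :: "'c set \<Rightarrow> ereal" where
  "pm_distortion C = (SUP x \<in> {(n, \<sigma>, d, a). valid_instance C n \<sigma> d \<and> a \<in> C \<and> admits_pm C n \<sigma> a}.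
                       (case x of (n, \<sigma>, d, a) \<Rightarrow> cost_ratio C n d a))"

end

theory Submission
  imports Defs
begin

text \<open>Some candidate always admits a perfect matching of its domination graph: let the voters
in turn veto their least preferred top among the tops not vetoed yet, each voter being matched
to the owner of the top it vetoes; the last surviving top a beats every vetoed top in the eyes
of the voter who vetoed it. If voter i is matched to j and i ranks a weakly above top(j), then
for every candidate c
  d(i,a) \<le> d(i,top j) \<le> d(i,c) + d(c,j) + d(j,top j) \<le> d(i,c) + 2 d(j,c),
and summing along the matching gives SC(a) \<le> 3 SC(c).
For the lower bound take two voters with rankings a, b, \<dots> and b, a, \<dots>, placed on a line
at 1 and 2, with a at 0, b at 2 and all other candidates at 4: then SC(b) = 1 and every other
candidate costs at least 3. The mirror image of this embedding punishes b in the same way, so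
no rule can beat 3 on this profile.\<close>

lemma linear_order_onD:
  assumes "linear_order_on C r"
  shows "\<And>x. x \<in> C \<Longrightarrow> (x, x) \<in> r"
    "\<And>x y z. (x, y) \<in> r \<Longrightarrow> (y, z) \<in> r \<Longrightarrow> (x, z) \<in> r"
    "\<And>x y. (x, y) \<in> r \<Longrightarrow> (y, x) \<in> r \<Longrightarrow> x = y"
    "\<And>x y. x \<in> C \<Longrightarrow> y \<in> C \<Longrightarrow> x \<noteq> y \<Longrightarrow> (x, y) \<in> r \<or> (y, x) \<in> r"
  using assms unfolding linear_order_on_def partial_order_on_def preorder_on_def refl_on_def
    trans_on_def antisym_on_def total_on_def
  by blast+

lemma linear_order_on_ex_greatest:
  assumes "linear_order_on C r" "finite S" "S \<noteq> {}" "S \<subseteq> C"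
  shows "\<exists>c\<in>S. \<forall>s\<in>S. (s, c) \<in> r"
  using assms(2-4)
proof (induction S rule: finite_ne_induct)
  case (singleton x)
  then show ?case using linear_order_onD(1)[OF assms(1)] by auto
next
  case (insert x F)
  then obtain c where c: "c \<in> F" "\<forall>s\<in>F. (s, c) \<in> r" by auto
  show ?case
  proof (cases "(x, c) \<in> r")
    case True
    then show ?thesis using c by auto
  next
    case False
    then have "(c, x) \<in> r" using linear_order_onD(4)[OF assms(1), of x c] insert c by auto
    then show ?thesis
      using c insert linear_order_onD(1,2)[OF assms(1)] by blast
  qed
qed

lemma
  assumes "linear_order_on C (\<sigma> i)" "finite C" "C \<noteq> {}"
  shows top_in: "top C \<sigma> i \<in> C"
    and top_weakly_preferred: "c \<in> C \<Longrightarrow> weakly_prefers \<sigma> i (top C \<sigma> i) c"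
proof -
  obtain t where t: "t \<in> C" "\<forall>c\<in>C. (c, t) \<in> (\<sigma> i)\<inverse>"
    using linear_order_on_ex_greatest[of C "(\<sigma> i)\<inverse>" C] assms by auto
  have "\<exists>!t. t \<in> C \<and> (\<forall>c\<in>C. weakly_prefers \<sigma> i t c)"
  proof
    show "t \<in> C \<and> (\<forall>c\<in>C. weakly_prefers \<sigma> i t c)"
      using t by (auto simp: weakly_prefers_def)
  next
    fix t' assume "t' \<in> C \<and> (\<forall>c\<in>C. weakly_prefers \<sigma> i t' c)"
    then show "t' = t"
      using t linear_order_onD(3)[OF assms(1), of t' t] by (auto simp: weakly_prefers_def)
  qed
  then have "top C \<sigma> i \<in> C \<and> (\<forall>c\<in>C. weakly_prefers \<sigma> i (top C \<sigma> i) c)"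
    unfolding top_def by (rule theI')
  then show "top C \<sigma> i \<in> C" "c \<in> C \<Longrightarrow> weakly_prefers \<sigma> i (top C \<sigma> i) c" by auto
qed

lemma ex_dominating_matching:
  assumes "finite W" "W \<noteq> {}" "card U = card W" "t ` W \<subseteq> C"
    and "\<forall>i\<in>U. linear_order_on C (\<sigma> i)"
  shows "\<exists>a\<in>t ` W. \<exists>\<pi>. bij_betw \<pi> U W \<and> (\<forall>i\<in>U. (a, t (\<pi> i)) \<in> \<sigma> i)"
proof -
  have "card U > 0" using assms(1-3) by auto
  then have "finite U" "U \<noteq> {}" by (auto simp: card_gt_0_iff)
  then show ?thesis using assms
  proof (induction U arbitrary: W rule: finite_ne_induct)
    case (singleton i)
    then obtain j where W: "W = {j}" by (metis is_singleton_altdef is_singleton_def)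
    then have "(t j, t j) \<in> \<sigma> i"
      using singleton.prems linear_order_onD(1) by auto
    then show ?case using W by (auto simp: bij_betw_def)
  next
    case (insert i0 U)
    have lo: "linear_order_on C (\<sigma> i0)" using insert.prems by simp
    obtain c where c: "c \<in> t ` W" "\<forall>s\<in>t ` W. (s, c) \<in> \<sigma> i0"
      using linear_order_on_ex_greatest[OF lo, of "t ` W"] insert.prems by auto
    then obtain j0 where j0: "j0 \<in> W" "t j0 = c" by blast
    define W' where "W' = W - {j0}"
    have "card W' = card U" using insert j0(1) unfolding W'_def by simp
    moreover have "finite W'" using insert.prems unfolding W'_def by simp
    moreover have "W' \<noteq> {}" using \<open>card W' = card U\<close> insert.hyps(1,2) by auto
    ultimately obtain a \<pi> where a: "a \<in> t ` W'" "bij_betw \<pi> U W'" "\<forall>i\<in>U. (a, t (\<pi> i)) \<in> \<sigma> i"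
      using insert.IH[of W'] insert.prems unfolding W'_def by auto
    have "bij_betw (\<pi>(i0 := j0)) (U \<union> {i0}) (W' \<union> {j0})"
    proof (rule bij_betw_combine)
      show "bij_betw (\<pi>(i0 := j0)) U W'"
        using a(2) insert.hyps(3) by (subst bij_betw_cong[where g = \<pi>]) auto
    qed (auto simp: W'_def bij_betw_def)
    moreover have "U \<union> {i0} = insert i0 U" "W' \<union> {j0} = W" using j0(1) unfolding W'_def by auto
    moreover have "(a, t j0) \<in> \<sigma> i0" using a(1) c(2) j0(2) unfolding W'_def by auto
    ultimately have "bij_betw (\<pi>(i0 := j0)) (insert i0 U) W"
      "\<forall>i\<in>insert i0 U. (a, t ((\<pi>(i0 := j0)) i)) \<in> \<sigma> i"
      using a(3) insert.hyps(3) by auto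
    moreover have "a \<in> t ` W" using a(1) unfolding W'_def by auto
    ultimately show ?case by blast
  qed
qed

lemma ex_perfect_matching_iff_bij:
  "(\<exists>M. perfect_matching V E M) \<longleftrightarrow> (\<exists>\<pi>. bij_betw \<pi> V V \<and> (\<forall>i\<in>V. E i (\<pi> i)))"
proof
  assume "\<exists>M. perfect_matching V E M"
  then obtain M where M: "M \<subseteq> V \<times> V" "\<forall>(i, j)\<in>M. E i j"
    "\<forall>i\<in>V. \<exists>!j. (i, j) \<in> M" "\<forall>j\<in>V. \<exists>!i. (i, j) \<in> M"
    unfolding perfect_matching_def by blast
  define \<pi> where "\<pi> i = (THE j. (i, j) \<in> M)" for i
  have \<pi>M: "(i, j) \<in> M \<longleftrightarrow> j = \<pi> i" if "i \<in> V" for i j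
    using M(3) that theI'[of "\<lambda>j. (i, j) \<in> M"] unfolding \<pi>_def by blast
  have "bij_betw \<pi> V V"
  proof (rule bij_betw_imageI)
    show "inj_on \<pi> V"
      using M(1,4) \<pi>M by (intro inj_onI) (metis SigmaD2 subsetD)
    show "\<pi> ` V = V"
    proof
      show "\<pi> ` V \<subseteq> V" using M(1,3) \<pi>M by blast
      show "V \<subseteq> \<pi> ` V"
      proof
        fix j assume "j \<in> V"
        then obtain i where "(i, j) \<in> M" using M(4) by blast
        then show "j \<in> \<pi> ` V" using M(1) \<pi>M by blast
      qed
    qed
  qed
  moreover have "\<forall>i\<in>V. E i (\<pi> i)" using M(2) \<pi>M by blast
  ultimately show "\<exists>\<pi>. bij_betw \<pi> V V \<and> (\<forall>i\<in>V. E i (\<pi> i))" by blast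
next
  assume "\<exists>\<pi>. bij_betw \<pi> V V \<and> (\<forall>i\<in>V. E i (\<pi> i))"
  then obtain \<pi> where \<pi>: "bij_betw \<pi> V V" "\<forall>i\<in>V. E i (\<pi> i)" by blast
  have "\<exists>!i. (i, j) \<in> {(i, \<pi> i) | i. i \<in> V}" if "j \<in> V" for j
    using that \<pi>(1) unfolding bij_betw_def inj_on_def by blast
  then have "perfect_matching V E {(i, \<pi> i) | i. i \<in> V}"
    using \<pi> bij_betw_apply[OF \<pi>(1)] unfolding perfect_matching_def by auto
  then show "\<exists>M. perfect_matching V E M" by blast
qed

lemma ex_admits_pm:
  assumes "finite C" "C \<noteq> {}" "n \<ge> 1" "profile C n \<sigma>"
  shows "\<exists>a\<in>C. admits_pm C n \<sigma> a"
proof -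
  have lo: "\<forall>i\<in>voters n. linear_order_on C (\<sigma> i)" using assms(4) by (simp add: profile_def)
  have tops: "top C \<sigma> ` voters n \<subseteq> C" using top_in lo assms(1,2) by blast
  have "0 \<in> voters n" using assms(3) by (simp add: voters_def)
  then obtain a \<pi> where "a \<in> top C \<sigma> ` voters n" "bij_betw \<pi> (voters n) (voters n)"
    "\<forall>i\<in>voters n. (a, top C \<sigma> (\<pi> i)) \<in> \<sigma> i"
    using ex_dominating_matching[OF _ _ _ tops lo] by (fastforce simp: voters_def)
  then show ?thesis
    using tops unfolding admits_pm_def ex_perfect_matching_iff_bij dom_edge_def weakly_prefers_def
    by blast
qed

lemma consistent_weakly_prefers:
  assumes "consistent n C \<sigma> d" "i \<in> voters n" "c \<in> C" "c' \<in> C" "weakly_prefers \<sigma> i c c'"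
  shows "d (Inl i) (Inr c) \<le> d (Inl i) (Inr c')"
  using assms unfolding consistent_def strictly_prefers_def weakly_prefers_def
  by (cases "c = c'") auto

lemma dist_le_via_matched_voter:
  assumes "is_distance n C d" "consistent n C \<sigma> d" "i \<in> voters n" "j \<in> voters n"
    and "a \<in> C" "c \<in> C" "t \<in> C" "weakly_prefers \<sigma> i a t" "weakly_prefers \<sigma> j t c"
  shows "d (Inl i) (Inr a) \<le> d (Inl i) (Inr c) + 2 * d (Inl j) (Inr c)"
proof -
  have pts: "Inl i \<in> points n C" "Inl j \<in> points n C" "Inr c \<in> points n C" "Inr t \<in> points n C"
    using assms(3,4,6,7) by (auto simp: points_def)
  have "d (Inl i) (Inr a) \<le> d (Inl i) (Inr t)"
    using consistent_weakly_prefers[OF assms(2,3,5,7,8)] .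
  also have "\<dots> \<le> d (Inl i) (Inr c) + d (Inr c) (Inl j) + d (Inl j) (Inr t)"
  proof -
    have "\<And>x y z. x \<in> points n C \<Longrightarrow> y \<in> points n C \<Longrightarrow> z \<in> points n C \<Longrightarrow>
        d x z \<le> d x y + d y z"
      using assms(1) unfolding is_distance_def by blast
    from this[of "Inl i" "Inr c" "Inr t"] this[of "Inr c" "Inl j" "Inr t"] pts show ?thesis
      by linarith
  qed
  also have "d (Inl j) (Inr t) \<le> d (Inl j) (Inr c)"
    using consistent_weakly_prefers[OF assms(2,4,7,6,9)] .
  also have "d (Inr c) (Inl j) = d (Inl j) (Inr c)"
    using assms(1) pts unfolding is_distance_def by blast
  finally show ?thesis by simp
qed

lemma SC_nonneg: "is_distance n C d \<Longrightarrow> c \<in> C \<Longrightarrow> 0 \<le> SC n d c"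
  unfolding SC_def is_distance_def points_def by (intro sum_nonneg) blast

lemma SC_le_3_SC_if_admits_pm:
  assumes "valid_instance C n \<sigma> d" "finite C" "a \<in> C" "c \<in> C" "admits_pm C n \<sigma> a"
  shows "SC n d a \<le> 3 * SC n d c"
proof -
  have dist: "is_distance n C d" and cons: "consistent n C \<sigma> d"
    and lo: "\<forall>j\<in>voters n. linear_order_on C (\<sigma> j)"
    using assms(1) by (auto simp: valid_instance_def profile_def)
  obtain \<pi> where \<pi>: "bij_betw \<pi> (voters n) (voters n)"
    "\<forall>i\<in>voters n. weakly_prefers \<sigma> i a (top C \<sigma> (\<pi> i))"
    using assms(5) unfolding admits_pm_def ex_perfect_matching_iff_bij dom_edge_def by blast
  have "d (Inl i) (Inr a) \<le> d (Inl i) (Inr c) + 2 * d (Inl (\<pi> i)) (Inr c)" if i: "i \<in> voters n" for i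
  proof -
    have "\<pi> i \<in> voters n" using bij_betw_apply[OF \<pi>(1) i] .
    then have "top C \<sigma> (\<pi> i) \<in> C" "weakly_prefers \<sigma> (\<pi> i) (top C \<sigma> (\<pi> i)) c"
      using lo assms(2,4) by (auto intro: top_in top_weakly_preferred)
    then show ?thesis
      using dist_le_via_matched_voter[OF dist cons i \<open>\<pi> i \<in> voters n\<close> assms(3,4)] \<pi>(2) i by blast
  qed
  then have "SC n d a \<le> (\<Sum>i\<in>voters n. d (Inl i) (Inr c) + 2 * d (Inl (\<pi> i)) (Inr c))"
    unfolding SC_def by (rule sum_mono)
  also have "\<dots> = SC n d c + 2 * (\<Sum>i\<in>voters n. d (Inl (\<pi> i)) (Inr c))"
    unfolding SC_def by (simp add: sum.distrib sum_distrib_left)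
  also have "(\<Sum>i\<in>voters n. d (Inl (\<pi> i)) (Inr c)) = SC n d c"
    unfolding SC_def using sum.reindex_bij_betw[OF \<pi>(1), of "\<lambda>j. d (Inl j) (Inr c)"] by simp
  finally show ?thesis by simp
qed

lemma cost_ratio_le:
  assumes "0 \<le> SC n d x" "SC n d x \<le> r * opt_cost C n d" "1 \<le> r"
  shows "cost_ratio C n d x \<le> ereal r"
proof (cases "opt_cost C n d = 0")
  case True
  then show ?thesis using assms by (simp add: cost_ratio_def)
next
  case False
  have "0 \<le> r * opt_cost C n d" using assms(1,2) by linarith
  then have "0 < opt_cost C n d" using False assms(3) by (simp add: zero_le_mult_iff)
  then show ?thesis using False assms(2) by (simp add: cost_ratio_def divide_le_eq)
qed

lemma cost_ratio_ge:
  assumes "0 < opt_cost C n d" "r * opt_cost C n d \<le> SC n d x"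
  shows "ereal r \<le> cost_ratio C n d x"
  using assms by (simp add: cost_ratio_def le_divide_eq)

lemma opt_cost_attained:
  assumes "finite C" "C \<noteq> {}"
  obtains c where "c \<in> C" "opt_cost C n d = SC n d c"
proof -
  have "opt_cost C n d \<in> SC n d ` C"
    unfolding opt_cost_def using assms by (intro Min_in) auto
  then show thesis using that by blast
qed

lemma pm_cost_ratio_le_3:
  assumes "valid_instance C n \<sigma> d" "finite C" "a \<in> C" "admits_pm C n \<sigma> a"
  shows "cost_ratio C n d a \<le> 3"
proof -
  obtain c where "c \<in> C" "opt_cost C n d = SC n d c" using opt_cost_attained assms(2,3) by blast
  then have "SC n d a \<le> 3 * opt_cost C n d"
    using SC_le_3_SC_if_admits_pm[OF assms(1,2,3) _ assms(4)] by simp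
  moreover have "0 \<le> SC n d a"
    using SC_nonneg assms(1,3) by (auto simp: valid_instance_def)
  ultimately show ?thesis using cost_ratio_le[of n d a 3 C] by simp
qed

definition line_metric :: "(nat + 'c \<Rightarrow> real) \<Rightarrow> nat + 'c \<Rightarrow> nat + 'c \<Rightarrow> real" where
  "line_metric p x y = \<bar>p x - p y\<bar>"

lemma is_distance_line_metric: "is_distance n C (line_metric p)"
  unfolding is_distance_def line_metric_def by auto

lemma SC_two_voters:
  assumes "i < 2"
  shows "SC 2 d c = d (Inl i) (Inr c) + d (Inl (1 - i)) (Inr c)"
proof -
  have "SC 2 d c = d (Inl 0) (Inr c) + d (Inl 1) (Inr c)"
    unfolding SC_def voters_def by (simp add: numeral_2_eq_2 lessThan_Suc)
  then show ?thesis using assms by (cases i) auto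
qed

lemma not_strictly_prefers_if_weakly_prefers:
  assumes "linear_order_on C (\<sigma> i)" "weakly_prefers \<sigma> i c' c"
  shows "\<not> strictly_prefers \<sigma> i c c'"
  using assms(2) linear_order_onD(3)[OF assms(1), of c c']
  unfolding weakly_prefers_def strictly_prefers_def by blast

lemma two_voter_ratio_ge_3:
  assumes "finite C" "profile C 2 \<sigma>" "a \<in> C" "b \<in> C" "a \<noteq> b" "i < 2"
    and i_ranks_a_b_first: "\<forall>c\<in>C - {a, b}. weakly_prefers \<sigma> i a c \<and> weakly_prefers \<sigma> i b c"
    and other_ranks_b_first: "\<forall>c\<in>C. weakly_prefers \<sigma> (1 - i) b c"
  shows "\<exists>d. valid_instance C 2 \<sigma> d \<and> (\<forall>x\<in>C - {b}. 3 \<le> cost_ratio C 2 d x)"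
proof -
  define p where
    "p x = (case x of Inl k \<Rightarrow> if k = i then 1 else 2
                    | Inr c \<Rightarrow> if c = a then 0 else if c = b then 2 else (4::real))" for x
  define d where "d = line_metric p"
  have d_i: "d (Inl i) (Inr c) = (if c \<in> {a, b} then 1 else 3)" for c
    using assms(5) by (simp add: d_def line_metric_def p_def)
  have "1 - i \<noteq> i" using assms(6) by arith
  then have d_other: "d (Inl (1 - i)) (Inr c) = (if c = b then 0 else 2)" for c
    using assms(5) by (simp add: d_def line_metric_def p_def)
  have lo: "linear_order_on C (\<sigma> k)" if "k < 2" for k
    using assms(2) that by (simp add: profile_def voters_def)
  have "consistent 2 C \<sigma> d"
    unfolding consistent_def
  proof (intro ballI impI)
    fix k c c' assume k: "k \<in> voters 2" and cc': "c \<in> C" "c' \<in> C" "strictly_prefers \<sigma> k c c'"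
    have "k = i \<or> k = 1 - i" using k assms(6) unfolding voters_def by auto
    then consider "k = i" | "k = 1 - i" by blast
    then show "d (Inl k) (Inr c) \<le> d (Inl k) (Inr c')"
    proof cases
      case 1
      show ?thesis
      proof (cases "c \<in> {a, b}")
        case False
        then have "c' \<notin> {a, b}"
          using cc' i_ranks_a_b_first lo[OF assms(6)] 1
            not_strictly_prefers_if_weakly_prefers[of C \<sigma> i]
          by blast
        with False show ?thesis by (simp add: 1 d_i)
      qed (simp add: 1 d_i)
    next
      case 2
      show ?thesis
      proof (cases "c = b")
        case False
        then have "c' \<noteq> b"
          using cc' other_ranks_b_first lo[of "1 - i"] 2
            not_strictly_prefers_if_weakly_prefers[of C \<sigma> "1 - i"]
          by auto
        with False show ?thesis unfolding 2 d_other by simp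
      qed (unfold 2 d_other, simp)
    qed
  qed
  then have valid: "valid_instance C 2 \<sigma> d"
    using assms(2) by (simp add: valid_instance_def d_def is_distance_line_metric)
  have SC_d: "SC 2 d c = (if c = b then 1 else if c = a then 3 else 5)" for c
    unfolding SC_two_voters[OF assms(6)] d_i d_other using assms(5) by simp
  have "opt_cost C 2 d = 1"
    unfolding opt_cost_def using assms(1,4) by (intro Min_eqI) (auto simp: SC_d)
  then have "3 \<le> cost_ratio C 2 d x" if "x \<in> C - {b}" for x
    using that cost_ratio_ge[of C 2 d 3 x] by (auto simp: SC_d)
  with valid show ?thesis by blast
qed

definition order_by :: "'c set \<Rightarrow> ('c \<Rightarrow> nat) \<Rightarrow> ('c \<times> 'c) set" where
  "order_by C r = {(x, y). x \<in> C \<and> y \<in> C \<and> r x \<le> r y}"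

lemma linear_order_on_order_by: "inj_on r C \<Longrightarrow> linear_order_on C (order_by C r)"
  unfolding linear_order_on_def partial_order_on_def preorder_on_def refl_on_def
    trans_on_def antisym_on_def total_on_def order_by_def inj_on_def
  by (auto intro: order_trans)

definition rank_first_two :: "('c \<Rightarrow> nat) \<Rightarrow> 'c \<Rightarrow> 'c \<Rightarrow> 'c \<Rightarrow> nat" where
  "rank_first_two g a b c = (if c = a then 0 else if c = b then 1 else g c + 2)"

lemma inj_on_rank_first_two: "inj_on g C \<Longrightarrow> inj_on (rank_first_two g a b) C"
  unfolding inj_on_def rank_first_two_def by auto

lemma ex_profile_ratio_ge_3:
  assumes "finite C" "card C \<ge> 2"
  shows "\<exists>\<sigma>. profile C 2 \<sigma> \<and> (\<forall>x\<in>C. \<exists>d. valid_instance C 2 \<sigma> d \<and> 3 \<le> cost_ratio C 2 d x)"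
proof -
  obtain a b where ab: "a \<in> C" "b \<in> C" "a \<noteq> b"
    using assms(2) unfolding numeral_2_eq_2 card_le_Suc_iff by blast
  obtain g :: "_ \<Rightarrow> nat" where g: "inj_on g C"
    using finite_imp_inj_to_nat_seg[OF assms(1)] by blast
  define \<sigma> where
    "\<sigma> k = order_by C (if k = 0 then rank_first_two g a b else rank_first_two g b a)" for k :: nat
  have "profile C 2 \<sigma>"
    unfolding profile_def \<sigma>_def
    using linear_order_on_order_by inj_on_rank_first_two[OF g] by auto
  moreover have "\<exists>d. valid_instance C 2 \<sigma> d \<and> 3 \<le> cost_ratio C 2 d x" if "x \<in> C" for x
  proof (cases "x = b")
    case True
    have "\<exists>d. valid_instance C 2 \<sigma> d \<and> (\<forall>x\<in>C - {a}. 3 \<le> cost_ratio C 2 d x)"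
    proof (rule two_voter_ratio_ge_3[where i = 1])
      show "\<forall>c\<in>C - {b, a}. weakly_prefers \<sigma> 1 b c \<and> weakly_prefers \<sigma> 1 a c"
        "\<forall>c\<in>C. weakly_prefers \<sigma> (1 - 1) a c"
        using ab by (auto simp: \<sigma>_def order_by_def rank_first_two_def weakly_prefers_def)
    qed (use \<open>profile C 2 \<sigma>\<close> ab assms(1) in auto)
    then show ?thesis using True ab by auto
  next
    case False
    have "\<exists>d. valid_instance C 2 \<sigma> d \<and> (\<forall>x\<in>C - {b}. 3 \<le> cost_ratio C 2 d x)"
    proof (rule two_voter_ratio_ge_3[where i = 0])
      show "\<forall>c\<in>C - {a, b}. weakly_prefers \<sigma> 0 a c \<and> weakly_prefers \<sigma> 0 b c"
        "\<forall>c\<in>C. weakly_prefers \<sigma> (1 - 0) b c"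
        using ab by (auto simp: \<sigma>_def order_by_def rank_first_two_def weakly_prefers_def)
    qed (use \<open>profile C 2 \<sigma>\<close> ab assms(1) in auto)
    then show ?thesis using False that by auto
  qed
  ultimately show ?thesis by blast
qed

theorem corollary2:
  fixes C :: "'c set"
  assumes "finite C" and "card C \<ge> 2"
  shows "(\<forall>n \<sigma>. n \<ge> 1 \<and> profile C n \<sigma> \<longrightarrow> (\<exists>a\<in>C. admits_pm C n \<sigma> a))
         \<and> pm_distortion C = 3
         \<and> (\<forall>f. is_rule C f \<longrightarrow> distortion C f \<ge> 3)"
proof (intro conjI allI impI)
  have C: "C \<noteq> {}" using assms(2) by auto
  show pm_exists: "\<exists>a\<in>C. admits_pm C n \<sigma> a" if "n \<ge> 1 \<and> profile C n \<sigma>" for n \<sigma>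
    using ex_admits_pm[OF assms(1) C] that by blast
  obtain \<sigma> where \<sigma>: "profile C 2 \<sigma>"
    and ratio_ge_3: "\<And>x. x \<in> C \<Longrightarrow> \<exists>d. valid_instance C 2 \<sigma> d \<and> 3 \<le> cost_ratio C 2 d x"
    using ex_profile_ratio_ge_3[OF assms] by blast
  show "pm_distortion C = 3"
  proof (rule antisym)
    show "pm_distortion C \<le> 3"
      unfolding pm_distortion_def
      using pm_cost_ratio_le_3[OF _ assms(1)] by (intro SUP_least) auto
    obtain a where a: "a \<in> C" "admits_pm C 2 \<sigma> a" using pm_exists[of 2 \<sigma>] \<sigma> by auto
    obtain d where "valid_instance C 2 \<sigma> d" "3 \<le> cost_ratio C 2 d a"
      using ratio_ge_3[OF a(1)] by blast
    then show "3 \<le> pm_distortion C"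
      using a unfolding pm_distortion_def by (intro SUP_upper2[of "(2, \<sigma>, d, a)"]) auto
  qed
  show "distortion C f \<ge> 3" if "is_rule C f" for f
  proof -
    have "f 2 \<sigma> \<in> C" using that \<sigma> unfolding is_rule_def by simp
    then obtain d where "valid_instance C 2 \<sigma> d" "3 \<le> cost_ratio C 2 d (f 2 \<sigma>)"
      using ratio_ge_3 by blast
    then show ?thesis
      unfolding distortion_def by (intro SUP_upper2[of "(2, \<sigma>, d)"]) auto
  qed
qed

end
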